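(* For every $q\in\mathbb C$ (including $q=0$) the products $\cdot_{(k),q}$ on $V_L$ defined in the context satisfy the Borcherds identities, so that $(V_L,\cdot_{(k),q},e^0)$ is a vertex superalgebra $V_{L,q}$. For $q\neq 0$ the map $t_q:V_{L,q}\to V_L$, $t_q(x\otimes e^{\beta+\alpha})=q^{\mathrm{ht}(\alpha)}x\otimes e^{\beta+\alpha}$ ($\beta\in L_B$, $\alpha\in L_A$), is an isomorphism of vertex superalgebras. For $q=0$, one has $(x\otimes e^{\beta+\alpha})_{(k),0}(y\otimes e^{\beta'+\alpha'})=(x\otimes e^{\beta+\alpha})_{(k)}(y\otimes e^{\beta'+\alpha'})$ if $\alpha,\alpha'$ lie in a common cone $\Delta_j$ ($1\le j\le N+1$), and $=0$ otherwise.
   Context: Fix $N\ge 1$. Let $L$ be the free abelian group with basis $A^1,\dots,A^N,B^1,\dots,B^N$ and symmetric bilinear form $(A^i,B^j)=\delta_{ij}$, $(A^i,A^j)=(B^i,B^j)=0$; let $L_A$ (resp. $L_B$) be the span of the $A^i$ (resp. $B^i$). Let $V_L$ be the vertex superalgebra $\Lambda\otimes S\otimes\mathbb C[L]$: it is the direct sum over $\alpha\in L$ of Fock modules $V_L(\alpha)$ generated from vectors $e^\alpha$ over the Heisenberg algebra with modes $x_j$ ($x\in L\otimes\mathbb C$, $j\in\mathbb Z$, $[x_i,y_j]=i(x,y)\delta_{i+j,0}$) and the Clifford algebra with odd modes $\Psi^i_j,\Phi^i_j$ ($[\Psi^i_j,\Phi^k_l]_+=\delta_{ik}\delta_{j+l,0}$,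 other anticommutators zero), with $x_ne^\alpha=0$ ($n>0$), $x_0e^\alpha=(x,\alpha)e^\alpha$, $\Psi^i_ne^\alpha=0$ ($n\ge0$), $\Phi^i_ne^\alpha=0$ ($n\ge1$). Its vertex structure is the standard lattice one: vacuum $e^0$, fields $x(z)=\sum_j x_jz^{-j-1}$, $\Phi^i(z)=\sum_j\Phi^i_jz^{-j}$, $\Psi^i(z)=\sum_j\Psi^i_jz^{-j-1}$, $e^\alpha(z)=e^\alpha\exp(-\sum_{n<0}\frac{\alpha_n}{n}z^{-n})\exp(-\sum_{n>0}\frac{\alpha_n}{n}z^{-n})z^{\alpha_0}$, normally ordered products for general states; $a_{(k)}b$ denotes the coefficient of $z^{-k-1}$ in $a(z)b$. Every vector of $V_L(\beta+\alpha)$, $\beta\in L_B,\alpha\in L_A$, is said to have $A$-part $\alpha$. Let $\xi_i=A^i$ ($1\le i\le N$), $\xi_{N+1}=-A^1-\dots-A^N$, and $\Delta_j$ the set of nonnegative integer combinations of $\{\xi_i\}_{i\ne j}$. Each $\alpha\in L_A$ is uniquely $\alpha=\sum_{i=1}^{N+1}n_i\xi_i$ with $n_i\ge0$ and at least one $n_i=0$; set $\mathrm{ht}(\alpha)=\sum_in_i$. Then $\mathrm{ht}(\alpha)+\mathrm{ht}(\alpha')\ge\mathrm{ht}(\alpha+\alpha')$. For $q\in\mathbb C$ define, for $a$ with $A$-part $\alpha$ and $b$ with $A$-part $\alpha'$, $a_{(k),q}b=q^{\mathrm{ht}(\alpha)+\mathrm{ht}(\alpha')-\mathrm{ht}(\alpha+\alpha')}\,a_{(k)}b$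 (with $0^0=1$), extended bilinearly. *)

theory Defs
  imports Complex_Main "HOL-Library.Multiset" "HOL-Library.Function_Algebras"
          "HOL-Library.Product_Lexorder"
begin

text \<open>A lattice element gamma = sum a_i A^i + sum b_i B^i is the pair (a,b) of coefficient
  functions; only indices 1..N are used. fst gamma is its A-part.\<close>
type_synonym latt = "(nat \<Rightarrow> int) \<times> (nat \<Rightarrow> int)"

definition lat :: "nat \<Rightarrow> latt set" where
  "lat N = {\<gamma>. \<forall>i. (i = 0 \<or> i > N) \<longrightarrow> fst \<gamma> i = 0 \<and> snd \<gamma> i = 0}"

definition lzero :: latt where "lzero = (\<lambda>_. 0, \<lambda>_. 0)"

definition ladd :: "latt \<Rightarrow> latt \<Rightarrow> latt" where
  "ladd \<gamma> \<delta> = (\<lambda>i. fst \<gamma> i + fst \<delta> i, \<lambda>i. snd \<gamma> i + snd \<delta> i)"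

definition pair :: "nat \<Rightarrow> latt \<Rightarrow> latt \<Rightarrow> int" where
  "pair N \<gamma> \<delta> = (\<Sum>i\<in>{1..N}. fst \<gamma> i * snd \<delta> i + snd \<gamma> i * fst \<delta> i)"

text \<open>Bosonic creation labels: (False,i,n) = A^i_{-n}, (True,i,n) = B^i_{-n}, n >= 1.
  Fermionic creation labels: (False,i,n) = Psi^i_{-n} (n >= 1), (True,i,n) = Phi^i_{-n} (n >= 0).
  A basis vector is (multiset of bosonic labels, set of fermionic labels, lattice point):
  the monomial (product of bosonic modes)(ordered product of fermionic modes, in increasing
  lexicographic label order) applied to e^gamma.\<close>
type_synonym lab = "bool \<times> nat \<times> nat"
type_synonym basis = "lab multiset \<times> lab set \<times> latt"
type_synonym vec = "basis \<Rightarrow> complex"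

definition valid :: "nat \<Rightarrow> basis \<Rightarrow> bool" where
  "valid N b \<longleftrightarrow>
     (\<forall>(fl,i,n)\<in>set_mset (fst b). 1 \<le> i \<and> i \<le> N \<and> 1 \<le> n) \<and>
     finite (fst (snd b)) \<and>
     (\<forall>(fl,i,n)\<in>fst (snd b). 1 \<le> i \<and> i \<le> N \<and> (fl \<or> 1 \<le> n)) \<and>
     snd (snd b) \<in> lat N"

definition VL :: "nat \<Rightarrow> vec set" where
  "VL N = {v. finite {b. v b \<noteq> 0} \<and> (\<forall>b. v b \<noteq> 0 \<longrightarrow> valid N b)}"

definition bas :: "basis \<Rightarrow> vec" where "bas b = (\<lambda>x. if x = b then 1 else 0)"

definition sc :: "complex \<Rightarrow> vec \<Rightarrow> vec" where "sc c v = (\<lambda>x. c * v x)"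

definition evec :: "latt \<Rightarrow> vec" where "evec \<gamma> = bas ({#}, {}, \<gamma>)"

definition vac :: vec where "vac = evec lzero"

definition lin :: "(basis \<Rightarrow> vec) \<Rightarrow> vec \<Rightarrow> vec" where
  "lin f v = (\<Sum>b\<in>{b. v b \<noteq> 0}. sc (v b) (f b))"

definition Apart_b :: "basis \<Rightarrow> (nat \<Rightarrow> int)" where "Apart_b b = fst (snd (snd b))"

definition has_Apart :: "nat \<Rightarrow> (nat \<Rightarrow> int) \<Rightarrow> vec \<Rightarrow> bool" where
  "has_Apart N \<alpha> v \<longleftrightarrow> v \<in> VL N \<and> (\<forall>b. v b \<noteq> 0 \<longrightarrow> Apart_b b = \<alpha>)"

definition hom :: "vec \<Rightarrow> bool \<Rightarrow> bool" where
  "hom v p \<longleftrightarrow> (\<forall>b. v b \<noteq> 0 \<longrightarrow> odd (card (fst (snd b))) = p)"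

text \<open>heis (fl,i) m is the mode h_m for h = A^i (fl = False) or h = B^i (fl = True),
  acting on a basis vector.\<close>
definition heis :: "bool \<times> nat \<Rightarrow> int \<Rightarrow> basis \<Rightarrow> vec" where
  "heis h m b = (case h of (fl, i) \<Rightarrow> case b of (M, F, \<gamma>) \<Rightarrow>
     if m < 0 then bas (add_mset (fl, i, nat (-m)) M, F, \<gamma>)
     else if m = 0 then sc (of_int (if fl then fst \<gamma> i else snd \<gamma> i)) (bas b)
     else sc (of_int m * of_nat (count M (\<not> fl, i, nat m))) (bas (M - {#(\<not> fl, i, nat m)#}, F, \<gamma>)))"

definition heis_gen :: "nat \<Rightarrow> latt \<Rightarrow> int \<Rightarrow> vec \<Rightarrow> vec" where
  "heis_gen N \<gamma> m v = (\<Sum>i\<in>{1..N}. sc (of_int (fst \<gamma> i)) (lin (heis (False, i) m) v)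
                                  + sc (of_int (snd \<gamma> i)) (lin (heis (True, i) m) v))"

definition fsign :: "lab set \<Rightarrow> lab \<Rightarrow> complex" where
  "fsign F l = (-1) ^ card {l'\<in>F. l' < l}"

definition fcreate :: "lab \<Rightarrow> basis \<Rightarrow> vec" where
  "fcreate l b = (case b of (M, F, \<gamma>) \<Rightarrow>
     if l \<in> F then 0 else sc (fsign F l) (bas (M, insert l F, \<gamma>)))"

definition fannih :: "lab \<Rightarrow> basis \<Rightarrow> vec" where
  "fannih l b = (case b of (M, F, \<gamma>) \<Rightarrow>
     if l \<in> F then sc (fsign F l) (bas (M, F - {l}, \<gamma>)) else 0)"

text \<open>Psi^i_m and Phi^i_m ([Psi^i_j, Phi^k_l]_+ = delta_ik delta_{j+l,0}).\<close>
definition psi :: "nat \<Rightarrow> int \<Rightarrow> basis \<Rightarrow> vec" where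
  "psi i m = (if m < 0 then fcreate (False, i, nat (-m)) else fannih (True, i, nat m))"

definition phi :: "nat \<Rightarrow> int \<Rightarrow> basis \<Rightarrow> vec" where
  "phi i m = (if m \<le> 0 then fcreate (True, i, nat (-m)) else fannih (False, i, nat m))"

text \<open>Coefficients s_k of z^k in exp(sum_{m>0} gamma_{-m} z^m / m) e^{gamma+delta}:
  s_0 = e^{gamma+delta}, k s_k = sum_{m=1}^k gamma_{-m} s_{k-m}. cohl returns [s_0,...,s_k].\<close>
fun cohl :: "nat \<Rightarrow> latt \<Rightarrow> latt \<Rightarrow> nat \<Rightarrow> vec list" where
  "cohl N \<gamma> \<delta> 0 = [evec (ladd \<gamma> \<delta>)]"
| "cohl N \<gamma> \<delta> (Suc k) = (let L = cohl N \<gamma> \<delta> k in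
     L @ [sc (1 / of_nat (Suc k))
            (\<Sum>m\<in>{1..Suc k}. heis_gen N \<gamma> (- int m) (L ! (Suc k - m)))])"

definition coh :: "nat \<Rightarrow> latt \<Rightarrow> latt \<Rightarrow> nat \<Rightarrow> vec" where
  "coh N \<gamma> \<delta> k = cohl N \<gamma> \<delta> k ! k"

definition fsum :: "(nat \<Rightarrow> vec) \<Rightarrow> vec" where
  "fsum f = (\<Sum>j\<in>{j. f j \<noteq> 0}. f j)"

definition vsa :: "vec set \<Rightarrow> (int \<Rightarrow> vec \<Rightarrow> vec \<Rightarrow> vec) \<Rightarrow> vec \<Rightarrow> bool" where
  "vsa S Y one \<longleftrightarrow>
     one \<in> S \<and> hom one False \<and>
     (\<forall>k. \<forall>a\<in>S. \<forall>b\<in>S. Y k a b \<in> S) \<and>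
     (\<forall>k. \<forall>a\<in>S. \<forall>a'\<in>S. \<forall>b\<in>S. \<forall>c.
        Y k (a + a') b = Y k a b + Y k a' b \<and> Y k (sc c a) b = sc c (Y k a b) \<and>
        Y k b (a + a') = Y k b a + Y k b a' \<and> Y k b (sc c a) = sc c (Y k b a)) \<and>
     (\<forall>a\<in>S. \<forall>b\<in>S. \<exists>M. \<forall>k\<ge>M. Y k a b = 0) \<and>
     (\<forall>a\<in>S. Y (-1) one a = a \<and> (\<forall>k. k \<noteq> -1 \<longrightarrow> Y k one a = 0)) \<and>
     (\<forall>a\<in>S. Y (-1) a one = a \<and> (\<forall>k\<ge>0. Y k a one = 0)) \<and>
     (\<forall>k. \<forall>a\<in>S. \<forall>b\<in>S. \<forall>p p'. hom a p \<longrightarrow> hom b p' \<longrightarrow> hom (Y k a b) (p \<noteq> p')) \<and>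
     (\<forall>a\<in>S. \<forall>b\<in>S. \<forall>c\<in>S. \<forall>p p'. hom a p \<longrightarrow> hom b p' \<longrightarrow> (\<forall>m n k :: int.
        fsum (\<lambda>j. sc (of_int m gchoose j) (Y (m + k - int j) (Y (n + int j) a b) c)) =
        fsum (\<lambda>j. sc ((-1) ^ j * (of_int n gchoose j))
                  (Y (m + n - int j) a (Y (k + int j) b c)
                   - sc ((if even n then 1 else -1) * (if p \<and> p' then -1 else 1))
                        (Y (n + k - int j) b (Y (m + int j) a c))))))"

definition vsa_iso :: "vec set \<Rightarrow> (int \<Rightarrow> vec \<Rightarrow> vec \<Rightarrow> vec) \<Rightarrow> vec
                       \<Rightarrow> (int \<Rightarrow> vec \<Rightarrow> vec \<Rightarrow> vec) \<Rightarrow> vec \<Rightarrow> (vec \<Rightarrow> vec) \<Rightarrow> bool" where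
  "vsa_iso S Y1 one1 Y2 one2 t \<longleftrightarrow>
     bij_betw t S S \<and>
     (\<forall>a\<in>S. \<forall>b\<in>S. \<forall>c. t (a + b) = t a + t b \<and> t (sc c a) = sc c (t a)) \<and>
     (\<forall>a\<in>S. \<forall>p. hom a p \<longrightarrow> hom (t a) p) \<and>
     t one1 = one2 \<and>
     (\<forall>k. \<forall>a\<in>S. \<forall>b\<in>S. t (Y1 k a b) = Y2 k (t a) (t b))"

text \<open>Y is the standard lattice vertex superalgebra structure: a vertex superalgebra with vacuum
  e^0 in which the fields of the generators A^i_{-1}e^0, B^i_{-1}e^0, Psi^i_{-1}e^0, Phi^i_0 e^0
  are x(z), Psi^i(z), Phi^i(z) (so x_(m) = x_m, Psi^i_(m) = Psi^i_m, Phi^i_(m) = Phi^i_{m+1}),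
  and Y(e^gamma,z) e^delta = eps z^{(gamma,delta)} exp(sum_{m>0} gamma_{-m} z^m/m) e^{gamma+delta}
  with a sign eps = +-1 (the usual cocycle). These data determine Y uniquely (for a given cocycle).\<close>
definition lattice_vsa :: "nat \<Rightarrow> (int \<Rightarrow> vec \<Rightarrow> vec \<Rightarrow> vec) \<Rightarrow> bool" where
  "lattice_vsa N Y \<longleftrightarrow>
     vsa (VL N) Y vac \<and>
     (\<forall>fl i m. \<forall>v\<in>VL N. 1 \<le> i \<and> i \<le> N \<longrightarrow>
        Y m (bas ({#(fl, i, 1)#}, {}, lzero)) v = lin (heis (fl, i) m) v) \<and>
     (\<forall>i m. \<forall>v\<in>VL N. 1 \<le> i \<and> i \<le> N \<longrightarrow>
        Y m (bas ({#}, {(False, i, 1)}, lzero)) v = lin (psi i m) v) \<and>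
     (\<forall>i m. \<forall>v\<in>VL N. 1 \<le> i \<and> i \<le> N \<longrightarrow>
        Y m (bas ({#}, {(True, i, 0)}, lzero)) v = lin (phi i (m + 1)) v) \<and>
     (\<forall>\<gamma>\<in>lat N. \<forall>\<delta>\<in>lat N. \<exists>\<epsilon>\<in>{1, -1::complex}. \<forall>n.
        Y n (evec \<gamma>) (evec \<delta>) =
          (if - n - 1 - pair N \<gamma> \<delta> < 0 then 0
           else sc \<epsilon> (coh N \<gamma> \<delta> (nat (- n - 1 - pair N \<gamma> \<delta>)))))"

text \<open>xi_i = A^i (1<=i<=N), xi_{N+1} = -(A^1+...+A^N). An element alpha of L_A (coefficient
  function c, alpha = sum c_i A^i) is sum n_i xi_i with n_i >= 0 and some n_i = 0.\<close>
definition hdec :: "nat \<Rightarrow> (nat \<Rightarrow> int) \<Rightarrow> (nat \<Rightarrow> nat) \<Rightarrow> bool" where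
  "hdec N c n \<longleftrightarrow> (\<forall>i. i \<notin> {1..Suc N} \<longrightarrow> n i = 0) \<and> (\<exists>i\<in>{1..Suc N}. n i = 0) \<and>
                  (\<forall>i\<in>{1..N}. c i = int (n i) - int (n (Suc N)))"

definition ht :: "nat \<Rightarrow> (nat \<Rightarrow> int) \<Rightarrow> nat" where
  "ht N c = (\<Sum>i\<in>{1..Suc N}. (THE n. hdec N c n) i)"

definition inDelta :: "nat \<Rightarrow> nat \<Rightarrow> (nat \<Rightarrow> int) \<Rightarrow> bool" where
  "inDelta N j c \<longleftrightarrow> (\<exists>n :: nat \<Rightarrow> nat. n j = 0 \<and>
                        (\<forall>i\<in>{1..N}. c i = int (n i) - int (n (Suc N))))"

definition qexp :: "nat \<Rightarrow> basis \<Rightarrow> basis \<Rightarrow> nat" where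
  "qexp N b1 b2 = ht N (Apart_b b1) + ht N (Apart_b b2) - ht N (Apart_b b1 + Apart_b b2)"

text \<open>a_(k),q b, extended bilinearly (0^0 = 1).\<close>
definition qprod :: "nat \<Rightarrow> complex \<Rightarrow> (int \<Rightarrow> vec \<Rightarrow> vec \<Rightarrow> vec) \<Rightarrow> int \<Rightarrow> vec \<Rightarrow> vec \<Rightarrow> vec" where
  "qprod N q Y k a b = (\<Sum>b1\<in>{x. a x \<noteq> 0}. \<Sum>b2\<in>{x. b x \<noteq> 0}.
        sc (a b1 * b b2 * q ^ qexp N b1 b2) (Y k (bas b1) (bas b2)))"

definition tq :: "nat \<Rightarrow> complex \<Rightarrow> vec \<Rightarrow> vec" where
  "tq N q = lin (\<lambda>b. sc (q ^ ht N (Apart_b b)) (bas b))"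

end

theory Submission
  imports Defs
begin

text \<open>Write \<open>\<alpha> = \<Sum> c\<^sub>i A\<^sup>i\<close>. In the decomposition \<open>\<alpha> = \<Sum> n\<^sub>i \<xi>\<^sub>i\<close> one has
  \<open>n\<^sub>N\<^sub>+\<^sub>1 = max(0, -c\<^sub>1, ..., -c\<^sub>N)\<close> and \<open>n\<^sub>i = c\<^sub>i + n\<^sub>N\<^sub>+\<^sub>1\<close>, so
  \<open>ht \<alpha> = \<Sum> c\<^sub>i + (N+1) n\<^sub>N\<^sub>+\<^sub>1\<close>. Hence the exponent \<open>ht \<alpha> + ht \<alpha>' - ht (\<alpha> + \<alpha>')\<close>
  is \<open>N+1\<close> times the subadditivity defect of that maximum, which vanishes exactly when
  \<open>\<alpha>\<close> and \<open>\<alpha>'\<close> lie in a common cone \<open>\<Delta>\<^sub>j\<close>. Being the coboundary of \<open>ht\<close>, the exponent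
  satisfies the cocycle identity, so every iterated deformed product of vectors with A-parts
  \<open>\<alpha>, \<alpha>', \<alpha>''\<close> is the standard one times the same power
  \<open>q ^ (ht \<alpha> + ht \<alpha>' + ht \<alpha>'' - ht (\<alpha> + \<alpha>' + \<alpha>''))\<close>. This needs that the standard
  products add A-parts, which is the Borcherds identity with \<open>m = n = 0\<close> for the vector
  \<open>B\<^sup>i\<^sub>-\<^sub>1 e\<^sup>0\<close>. So on basis vectors each deformed Borcherds identity is a multiple of a
  standard one, and trilinearity does the rest. For \<open>q \<noteq> 0\<close> the same coboundary property says
  that rescaling by \<open>q ^ ht\<close> intertwines the deformed and the standard products.\<close>

section \<open>Height\<close>

text \<open>The coefficient \<open>n\<^sub>N\<^sub>+\<^sub>1\<close> of \<open>\<xi>\<^sub>N\<^sub>+\<^sub>1\<close> in the decomposition of \<open>c\<close>: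
  the least \<open>n \<ge> 0\<close> with \<open>c\<^sub>i + n \<ge> 0\<close> for all \<open>i\<close>.\<close>
definition top_coeff :: "nat \<Rightarrow> (nat \<Rightarrow> int) \<Rightarrow> int" where
  "top_coeff N c = Max (insert 0 ((\<lambda>i. - c i) ` {1..N}))"

definition xi_coeffs :: "nat \<Rightarrow> (nat \<Rightarrow> int) \<Rightarrow> nat \<Rightarrow> nat" where
  "xi_coeffs N c i =
     (if i = Suc N then nat (top_coeff N c) else if i \<in> {1..N} then nat (c i + top_coeff N c) else 0)"

lemma top_coeff_nonneg: "0 \<le> top_coeff N c"
  unfolding top_coeff_def by (rule Max_ge) auto

lemma top_coeff_ge: "i \<in> {1..N} \<Longrightarrow> 0 \<le> c i + top_coeff N c"
  using Max_ge[of "insert 0 ((\<lambda>i. - c i) ` {1..N})" "- c i"] unfolding top_coeff_def by auto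

lemma top_coeff_le: "0 \<le> t \<Longrightarrow> (\<And>i. i \<in> {1..N} \<Longrightarrow> 0 \<le> c i + t) \<Longrightarrow> top_coeff N c \<le> t"
  unfolding top_coeff_def by (subst Max_le_iff) force+

lemma top_coeff_cases: "top_coeff N c = 0 \<or> (\<exists>i\<in>{1..N}. top_coeff N c = - c i)"
proof -
  have "top_coeff N c \<in> insert 0 ((\<lambda>i. - c i) ` {1..N})"
    unfolding top_coeff_def by (rule Max_in) auto
  thus ?thesis by auto
qed

lemma hdec_xi_coeffs: "hdec N c (xi_coeffs N c)"
proof -
  have "\<exists>i\<in>{1..Suc N}. xi_coeffs N c i = 0"
    using top_coeff_cases[of N c]
  proof
    assume "top_coeff N c = 0"
    thus ?thesis by (intro bexI[of _ "Suc N"]) (auto simp: xi_coeffs_def)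
  next
    assume "\<exists>i\<in>{1..N}. top_coeff N c = - c i"
    then obtain i where "i \<in> {1..N}" "top_coeff N c = - c i" by blast
    thus ?thesis by (intro bexI[of _ i]) (auto simp: xi_coeffs_def)
  qed
  moreover have "\<forall>i\<in>{1..N}. c i = int (xi_coeffs N c i) - int (xi_coeffs N c (Suc N))"
    using top_coeff_ge[of _ N c] top_coeff_nonneg[of N c] by (auto simp: xi_coeffs_def)
  ultimately show ?thesis unfolding hdec_def by (auto simp: xi_coeffs_def)
qed

lemma hdec_imp_eq_xi_coeffs:
  assumes "hdec N c n" shows "n = xi_coeffs N c"
proof -
  have out: "\<And>i. i \<notin> {1..Suc N} \<Longrightarrow> n i = 0" and zero: "\<exists>i\<in>{1..Suc N}. n i = 0"
    and eq: "\<And>i. i \<in> {1..N} \<Longrightarrow> c i = int (n i) - int (n (Suc N))"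
    using assms unfolding hdec_def by auto
  have "top_coeff N c \<le> int (n (Suc N))" using eq by (intro top_coeff_le) force+
  moreover have "int (n (Suc N)) \<le> top_coeff N c"
  proof -
    obtain i where i: "i \<in> {1..Suc N}" "n i = 0" using zero by blast
    show ?thesis
    proof (cases "i = Suc N")
      case True thus ?thesis using i top_coeff_nonneg[of N c] by simp
    next
      case False
      hence "i \<in> {1..N}" using i by auto
      thus ?thesis using eq i top_coeff_ge[of i N c] by force
    qed
  qed
  ultimately have top: "int (n (Suc N)) = top_coeff N c" by simp
  show ?thesis
  proof
    fix i show "n i = xi_coeffs N c i"
      using out[of i] eq[of i] top by (cases "i \<in> {1..N}") (auto simp: xi_coeffs_def)
  qed
qed

lemma The_hdec: "(THE n. hdec N c n) = xi_coeffs N c"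
  using hdec_xi_coeffs hdec_imp_eq_xi_coeffs by blast

lemma ht_eq: "int (ht N c) = (\<Sum>i=1..N. c i) + int (Suc N) * top_coeff N c"
proof -
  have "int (ht N c) = (\<Sum>i=1..N. int (xi_coeffs N c i)) + int (xi_coeffs N c (Suc N))"
    unfolding ht_def The_hdec by simp
  also have "(\<Sum>i=1..N. int (xi_coeffs N c i)) = (\<Sum>i=1..N. c i + top_coeff N c)"
    by (rule sum.cong) (use top_coeff_ge[of _ N c] in \<open>auto simp: xi_coeffs_def\<close>)
  finally show ?thesis
    using top_coeff_nonneg[of N c] by (simp add: xi_coeffs_def sum.distrib algebra_simps)
qed

lemma ht_zero [simp]: "ht N 0 = 0"
proof -
  have "top_coeff N 0 = 0" using top_coeff_nonneg by (intro antisym top_coeff_le) auto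
  thus ?thesis using ht_eq[of N 0] by simp
qed

lemma top_coeff_add_le: "top_coeff N (a + b) \<le> top_coeff N a + top_coeff N b"
  using top_coeff_ge[of _ N a] top_coeff_ge[of _ N b] top_coeff_nonneg[of N a] top_coeff_nonneg[of N b]
  by (intro top_coeff_le) force+

lemma ht_add_le: "ht N (a + b) \<le> ht N a + ht N b"
proof -
  have "int N * top_coeff N (a + b) \<le> int N * (top_coeff N a + top_coeff N b)"
    by (intro mult_left_mono top_coeff_add_le) simp
  hence "int (ht N (a + b)) \<le> int (ht N a) + int (ht N b)"
    unfolding ht_eq using top_coeff_add_le[of N a b] by (simp add: sum.distrib algebra_simps)
  thus ?thesis by simp
qed

text \<open>The subtraction on \<^typ>\<open>nat\<close> does not truncate, by \<open>ht_add_le\<close>.\<close>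
definition ht_defect :: "nat \<Rightarrow> (nat \<Rightarrow> int) \<Rightarrow> (nat \<Rightarrow> int) \<Rightarrow> nat" where
  "ht_defect N a b = ht N a + ht N b - ht N (a + b)"

lemma qexp_eq_ht_defect: "qexp N x y = ht_defect N (Apart_b x) (Apart_b y)"
  unfolding qexp_def ht_defect_def ..

lemma ht_defect_eq:
  "int (ht_defect N a b) = int (Suc N) * (top_coeff N a + top_coeff N b - top_coeff N (a + b))"
  unfolding ht_defect_def of_nat_diff[OF ht_add_le] of_nat_add ht_eq
  by (simp add: sum.distrib algebra_simps)

definition ht_defect3 :: "nat \<Rightarrow> (nat \<Rightarrow> int) \<Rightarrow> (nat \<Rightarrow> int) \<Rightarrow> (nat \<Rightarrow> int) \<Rightarrow> nat" where
  "ht_defect3 N a b c = ht N a + ht N b + ht N c - ht N (a + b + c)"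

lemma ht_defect3_commute: "ht_defect3 N a b c = ht_defect3 N b a c"
  unfolding ht_defect3_def by (simp add: ac_simps)

lemma ht_defect_cocycle_left: "ht_defect N a b + ht_defect N (a + b) c = ht_defect3 N a b c"
  using ht_add_le[of N a b] ht_add_le[of N "a + b" c] unfolding ht_defect_def ht_defect3_def by simp

lemma ht_defect_cocycle_right: "ht_defect N b c + ht_defect N a (b + c) = ht_defect3 N a b c"
  using ht_add_le[of N b c] ht_add_le[of N a "b + c"] unfolding ht_defect_def ht_defect3_def
  by (simp add: ac_simps)

lemma inDelta_iff_top_coeff:
  assumes "j \<in> {1..Suc N}"
  shows "inDelta N j c \<longleftrightarrow> top_coeff N c = (if j = Suc N then 0 else - c j)"
proof (cases "j = Suc N")
  case True
  show ?thesis
  proof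
    assume "inDelta N j c"
    then obtain n where "n j = 0" "\<forall>i\<in>{1..N}. c i = int (n i) - int (n (Suc N))"
      unfolding inDelta_def by blast
    thus "top_coeff N c = (if j = Suc N then 0 else - c j)"
      using True top_coeff_le[of 0 N c] top_coeff_nonneg[of N c] by auto
  next
    assume "top_coeff N c = (if j = Suc N then 0 else - c j)"
    thus "inDelta N j c" unfolding inDelta_def
      by (intro exI[of _ "\<lambda>i. if i = Suc N then 0 else nat (c i)"])
         (use True top_coeff_ge[of _ N c] in force)
  qed
next
  case False
  hence j: "j \<in> {1..N}" using assms by auto
  show ?thesis
  proof
    assume "inDelta N j c"
    then obtain n where "n j = 0" "\<forall>i\<in>{1..N}. c i = int (n i) - int (n (Suc N))"
      unfolding inDelta_def by blast
    hence "top_coeff N c \<le> - c j" using j by (intro top_coeff_le) force+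
    thus "top_coeff N c = (if j = Suc N then 0 else - c j)" using False top_coeff_ge[OF j, of c] by simp
  next
    assume "top_coeff N c = (if j = Suc N then 0 else - c j)"
    thus "inDelta N j c" unfolding inDelta_def
      by (intro exI[of _ "\<lambda>i. if i = Suc N then nat (- c j) else nat (c i - c j)"])
         (use False j top_coeff_ge[of _ N c] top_coeff_nonneg[of N c] in force)
  qed
qed

lemma top_coeff_add_eq_iff:
  "top_coeff N (a + b) = top_coeff N a + top_coeff N b \<longleftrightarrow> (\<exists>j\<in>{1..Suc N}. inDelta N j a \<and> inDelta N j b)"
proof
  assume additive: "top_coeff N (a + b) = top_coeff N a + top_coeff N b"
  show "\<exists>j\<in>{1..Suc N}. inDelta N j a \<and> inDelta N j b"
    using top_coeff_cases[of N "a + b"]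
  proof
    assume "top_coeff N (a + b) = 0"
    hence "top_coeff N a = 0" "top_coeff N b = 0"
      using additive top_coeff_nonneg[of N a] top_coeff_nonneg[of N b] by auto
    thus ?thesis by (intro bexI[of _ "Suc N"]) (auto simp: inDelta_iff_top_coeff)
  next
    assume "\<exists>i\<in>{1..N}. top_coeff N (a + b) = - (a + b) i"
    then obtain i where i: "i \<in> {1..N}" "top_coeff N (a + b) = - (a + b) i" by blast
    hence "top_coeff N a = - a i" "top_coeff N b = - b i"
      using additive top_coeff_ge[OF i(1), of a] top_coeff_ge[OF i(1), of b] by auto
    thus ?thesis using i by (intro bexI[of _ i]) (auto simp: inDelta_iff_top_coeff)
  qed
next
  assume "\<exists>j\<in>{1..Suc N}. inDelta N j a \<and> inDelta N j b"
  then obtain j where j: "j \<in> {1..Suc N}" "inDelta N j a" "inDelta N j b" by blast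
  show "top_coeff N (a + b) = top_coeff N a + top_coeff N b"
  proof (cases "j = Suc N")
    case True thus ?thesis
      using j top_coeff_add_le[of N a b] top_coeff_nonneg[of N "a + b"]
      by (auto simp: inDelta_iff_top_coeff)
  next
    case False
    hence "j \<in> {1..N}" using j by auto
    thus ?thesis using j False top_coeff_add_le[of N a b] top_coeff_ge[of j N "a + b"]
      by (auto simp: inDelta_iff_top_coeff)
  qed
qed

lemma ht_defect_eq_0_iff:
  "ht_defect N a b = 0 \<longleftrightarrow> (\<exists>j\<in>{1..Suc N}. inDelta N j a \<and> inDelta N j b)"
  unfolding top_coeff_add_eq_iff[symmetric] using ht_defect_eq[of N a b] by auto

definition spt :: "vec \<Rightarrow> basis set" where "spt v = {x. v x \<noteq> 0}"

lemma sum_apply: "(\<Sum>i\<in>I. f i) x = (\<Sum>i\<in>I. f i x)"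
  by (induction I rule: infinite_finite_induct) auto

lemma sc_apply: "sc c v x = c * v x" by (simp add: sc_def)
lemma sc_0 [simp]: "sc 0 v = 0" "sc c 0 = 0" by (auto simp: sc_def fun_eq_iff)
lemma sc_1 [simp]: "sc 1 v = v" by (simp add: sc_def)
lemma sc_sc [simp]: "sc c (sc d v) = sc (c * d) v" by (auto simp: sc_def)
lemma sc_diff: "sc c (v - w) = sc c v - sc c w" by (auto simp: sc_def fun_eq_iff algebra_simps)
lemma sc_add_left: "sc (c + d) v = sc c v + sc d v" by (auto simp: sc_def fun_eq_iff algebra_simps)
lemma sc_sum: "sc c (\<Sum>i\<in>I. f i) = (\<Sum>i\<in>I. sc c (f i))"
  by (auto simp: fun_eq_iff sum_apply sum_distrib_left sc_apply)
lemma sc_eq_0_iff: "sc c v = 0 \<longleftrightarrow> c = 0 \<or> v = 0" by (auto simp: sc_def fun_eq_iff)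

lemma bas_apply: "bas b x = (if x = b then 1 else 0)" by (simp add: bas_def)
lemma spt_bas [simp]: "spt (bas b) = {b}" by (auto simp: spt_def bas_def)
lemma spt_add: "spt (a + b) \<subseteq> spt a \<union> spt b" by (auto simp: spt_def)
lemma spt_sc: "spt (sc c a) \<subseteq> spt a" by (auto simp: spt_def sc_apply)

lemma VL_finite: "v \<in> VL N \<Longrightarrow> finite (spt v)" by (simp add: VL_def spt_def)
lemma VL_valid: "v \<in> VL N \<Longrightarrow> x \<in> spt v \<Longrightarrow> valid N x" unfolding VL_def spt_def by blast
lemma VL_I: "finite (spt v) \<Longrightarrow> (\<And>x. x \<in> spt v \<Longrightarrow> valid N x) \<Longrightarrow> v \<in> VL N"
  by (simp add: VL_def spt_def)

lemma VL_subset: assumes "v \<in> VL N" "spt w \<subseteq> spt v" shows "w \<in> VL N"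
  using assms by (intro VL_I) (auto intro: finite_subset VL_finite VL_valid)

lemma VL_zero [simp]: "0 \<in> VL N" by (simp add: VL_def)

lemma VL_add: assumes "v \<in> VL N" "w \<in> VL N" shows "v + w \<in> VL N"
  using assms spt_add[of v w] by (intro VL_I) (auto intro: finite_subset VL_finite VL_valid)

lemma VL_sc: "v \<in> VL N \<Longrightarrow> sc c v \<in> VL N"
  using VL_subset spt_sc by blast

lemma VL_sum: "(\<And>i. i \<in> I \<Longrightarrow> f i \<in> VL N) \<Longrightarrow> (\<Sum>i\<in>I. f i) \<in> VL N"
  by (induction I rule: infinite_finite_induct) (auto intro: VL_add)

lemma VL_bas: "valid N b \<Longrightarrow> bas b \<in> VL N" by (rule VL_I) auto

lemma VL_bas_spt: "v \<in> VL N \<Longrightarrow> x \<in> spt v \<Longrightarrow> bas x \<in> VL N"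
  using VL_bas VL_valid by blast

lemma vec_eq_sum_bas: assumes "finite X" "spt v \<subseteq> X" shows "v = (\<Sum>x\<in>X. sc (v x) (bas x))"
proof
  fix y
  have "(\<Sum>x\<in>X. sc (v x) (bas x)) y = (\<Sum>x\<in>X. if y = x then v x else 0)"
    unfolding sum_apply by (intro sum.cong) (auto simp: bas_apply sc_apply)
  also have "\<dots> = v y" using assms by (auto simp: spt_def)
  finally show "v y = (\<Sum>x\<in>X. sc (v x) (bas x)) y" by simp
qed

lemma lin_apply: "lin f v z = (\<Sum>b\<in>spt v. v b * f b z)"
  unfolding lin_def spt_def by (simp add: sum_apply sc_apply)

definition lin_on :: "nat \<Rightarrow> (vec \<Rightarrow> vec) \<Rightarrow> bool" where
  "lin_on N F \<longleftrightarrow> (\<forall>a\<in>VL N. \<forall>b\<in>VL N. \<forall>c. F (a + b) = F a + F b \<and> F (sc c a) = sc c (F a))"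

lemma lin_on_zero: "lin_on N F \<Longrightarrow> F 0 = 0"
  unfolding lin_on_def by (metis VL_zero sc_0(1))

lemma lin_on_add: "lin_on N F \<Longrightarrow> a \<in> VL N \<Longrightarrow> b \<in> VL N \<Longrightarrow> F (a + b) = F a + F b"
  unfolding lin_on_def by blast

lemma lin_on_sc: "lin_on N F \<Longrightarrow> a \<in> VL N \<Longrightarrow> F (sc c a) = sc c (F a)"
  unfolding lin_on_def by blast

lemma lin_on_sum:
  assumes F: "lin_on N F" and g: "\<And>i. i \<in> I \<Longrightarrow> g i \<in> VL N"
  shows "F (\<Sum>i\<in>I. sc (c i) (g i)) = (\<Sum>i\<in>I. sc (c i) (F (g i)))"
  using g
proof (induction I rule: infinite_finite_induct)
  case (insert x A)
  have S: "(\<Sum>i\<in>A. sc (c i) (g i)) \<in> VL N" and X: "g x \<in> VL N"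
    using insert.prems by (auto intro!: VL_sum VL_sc)
  have IH: "F (\<Sum>i\<in>A. sc (c i) (g i)) = (\<Sum>i\<in>A. sc (c i) (F (g i)))"
    using insert by simp
  show ?case
    unfolding sum.insert[OF insert.hyps] lin_on_add[OF F VL_sc[OF X] S] lin_on_sc[OF F X] IH ..
qed (use lin_on_zero[OF F] in simp_all)

lemma lin_on_eq_sum_bas:
  assumes "lin_on N F" "v \<in> VL N"
  shows "F v = (\<Sum>x\<in>spt v. sc (v x) (F (bas x)))"
proof -
  have "F v = F (\<Sum>x\<in>spt v. sc (v x) (bas x))"
    using vec_eq_sum_bas[OF VL_finite[OF assms(2)] order_refl] by simp
  also have "\<dots> = (\<Sum>x\<in>spt v. sc (v x) (F (bas x)))"
    by (rule lin_on_sum[OF assms(1)]) (rule VL_bas_spt[OF assms(2)])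
  finally show ?thesis .
qed

definition bil :: "nat \<Rightarrow> (int \<Rightarrow> vec \<Rightarrow> vec \<Rightarrow> vec) \<Rightarrow> bool" where
  "bil N P \<longleftrightarrow> (\<forall>k. \<forall>a\<in>VL N. \<forall>b\<in>VL N. P k a b \<in> VL N) \<and>
     (\<forall>k. \<forall>a\<in>VL N. \<forall>a'\<in>VL N. \<forall>b\<in>VL N. \<forall>c.
        P k (a + a') b = P k a b + P k a' b \<and> P k (sc c a) b = sc c (P k a b) \<and>
        P k b (a + a') = P k b a + P k b a' \<and> P k b (sc c a) = sc c (P k b a))"

lemma bil_VL: "bil N P \<Longrightarrow> a \<in> VL N \<Longrightarrow> b \<in> VL N \<Longrightarrow> P k a b \<in> VL N"
  unfolding bil_def by blast
lemma bil_lin_on_left: "bil N P \<Longrightarrow> b \<in> VL N \<Longrightarrow> lin_on N (\<lambda>a. P k a b)"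
  unfolding bil_def lin_on_def by blast
lemma bil_lin_on_right: "bil N P \<Longrightarrow> a \<in> VL N \<Longrightarrow> lin_on N (P k a)"
  unfolding bil_def lin_on_def by blast
lemma bil_zero_left: "bil N P \<Longrightarrow> b \<in> VL N \<Longrightarrow> P k 0 b = 0"
  using lin_on_zero[OF bil_lin_on_left] by blast
lemma bil_zero_right: "bil N P \<Longrightarrow> a \<in> VL N \<Longrightarrow> P k a 0 = 0"
  using lin_on_zero[OF bil_lin_on_right] by blast
lemma bil_sc_left: "bil N P \<Longrightarrow> a \<in> VL N \<Longrightarrow> b \<in> VL N \<Longrightarrow> P k (sc c a) b = sc c (P k a b)"
  unfolding bil_def by blast
lemma bil_sc_right: "bil N P \<Longrightarrow> a \<in> VL N \<Longrightarrow> b \<in> VL N \<Longrightarrow> P k a (sc c b) = sc c (P k a b)"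
  unfolding bil_def by blast

definition bilext :: "(basis \<Rightarrow> basis \<Rightarrow> vec) \<Rightarrow> vec \<Rightarrow> vec \<Rightarrow> vec" where
  "bilext F a b = (\<Sum>x\<in>spt a. \<Sum>y\<in>spt b. sc (a x * b y) (F x y))"

lemma bilext_mono_neutral:
  assumes "finite X" "spt a \<subseteq> X" "finite W" "spt b \<subseteq> W"
  shows "bilext F a b = (\<Sum>x\<in>X. \<Sum>y\<in>W. sc (a x * b y) (F x y))"
proof -
  have "bilext F a b = (\<Sum>x\<in>X. \<Sum>y\<in>spt b. sc (a x * b y) (F x y))"
    unfolding bilext_def by (rule sum.mono_neutral_left[OF assms(1,2)]) (auto simp: spt_def)
  also have "\<dots> = (\<Sum>x\<in>X. \<Sum>y\<in>W. sc (a x * b y) (F x y))"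
    by (intro sum.cong refl sum.mono_neutral_left[OF assms(3,4)]) (auto simp: spt_def)
  finally show ?thesis .
qed

lemma bilext_swap: "bilext F a b = bilext (\<lambda>y x. F x y) b a"
  unfolding bilext_def by (subst sum.swap) (simp add: mult.commute)

lemma bilext_add_left:
  assumes "finite (spt a)" "finite (spt a')" "finite (spt b)"
  shows "bilext F (a + a') b = bilext F a b + bilext F a' b"
proof -
  let ?X = "spt a \<union> spt a'"
  have "bilext F (a + a') b = (\<Sum>x\<in>?X. \<Sum>y\<in>spt b. sc ((a + a') x * b y) (F x y))"
    using assms spt_add by (intro bilext_mono_neutral) auto
  also have "\<dots> = (\<Sum>x\<in>?X. \<Sum>y\<in>spt b. sc (a x * b y) (F x y))
                + (\<Sum>x\<in>?X. \<Sum>y\<in>spt b. sc (a' x * b y) (F x y))"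
    by (simp add: distrib_right sc_add_left sum.distrib)
  also have "\<dots> = bilext F a b + bilext F a' b"
    using assms by (simp add: bilext_mono_neutral[of ?X _ "spt b"])
  finally show ?thesis .
qed

lemma bilext_sc_left:
  assumes "finite (spt a)" "finite (spt b)"
  shows "bilext F (sc c a) b = sc c (bilext F a b)"
proof -
  have "bilext F (sc c a) b = (\<Sum>x\<in>spt a. \<Sum>y\<in>spt b. sc (sc c a x * b y) (F x y))"
    using assms spt_sc by (intro bilext_mono_neutral) auto
  thus ?thesis unfolding bilext_def sc_sum by (simp add: sc_apply mult.assoc)
qed

lemma bilext_VL:
  assumes "\<And>x y. x \<in> spt a \<Longrightarrow> y \<in> spt b \<Longrightarrow> F x y \<in> VL N"
  shows "bilext F a b \<in> VL N"
  unfolding bilext_def using assms by (intro VL_sum VL_sc)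

lemma bilext_cong:
  "(\<And>x y. x \<in> spt a \<Longrightarrow> y \<in> spt b \<Longrightarrow> F x y = G x y) \<Longrightarrow> bilext F a b = bilext G a b"
  unfolding bilext_def by (intro sum.cong refl) auto

lemma sc_bilext: "sc c (bilext F a b) = bilext (\<lambda>x y. sc c (F x y)) a b"
  unfolding bilext_def sc_sum by (simp add: mult.commute)

lemma bilext_rescale:
  assumes "\<And>x. f x \<noteq> 0" "\<And>y. g y \<noteq> 0"
  shows "bilext (\<lambda>x y. sc (f x * g y) (F x y)) a b = bilext F (\<lambda>x. f x * a x) (\<lambda>y. g y * b y)"
proof -
  have "spt (\<lambda>x. f x * a x) = spt a" "spt (\<lambda>y. g y * b y) = spt b"
    using assms by (auto simp: spt_def)
  thus ?thesis unfolding bilext_def by (simp add: mult_ac)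
qed

lemma bil_bilext:
  assumes "\<And>k x y. valid N x \<Longrightarrow> valid N y \<Longrightarrow> F k x y \<in> VL N"
  shows "bil N (\<lambda>k. bilext (F k))"
  unfolding bil_def
proof (intro conjI allI ballI)
  fix k a b assume ab: "a \<in> VL N" "b \<in> VL N"
  show "bilext (F k) a b \<in> VL N" by (rule bilext_VL, rule assms) (use ab VL_valid in blast)+
next
  fix k a a' b c assume V: "a \<in> VL N" "a' \<in> VL N" "b \<in> VL N"
  hence fin: "finite (spt a)" "finite (spt a')" "finite (spt b)" "finite (spt (sc c a))"
    using VL_finite VL_sc by blast+
  show "bilext (F k) (a + a') b = bilext (F k) a b + bilext (F k) a' b"
    using fin(1-3) by (rule bilext_add_left)
  show "bilext (F k) (sc c a) b = sc c (bilext (F k) a b)"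
    using fin by (intro bilext_sc_left)
  show "bilext (F k) b (a + a') = bilext (F k) b a + bilext (F k) b a'"
    using fin(1-3) by (subst (1 2 3) bilext_swap) (rule bilext_add_left)
  show "bilext (F k) b (sc c a) = sc c (bilext (F k) b a)"
    using fin by (subst (1 2) bilext_swap) (rule bilext_sc_left)
qed

lemma bil_eq_bilext:
  assumes "bil N P" "u \<in> VL N" "v \<in> VL N"
  shows "P k u v = bilext (\<lambda>x y. P k (bas x) (bas y)) u v"
proof -
  have "P k u v = (\<Sum>x\<in>spt u. sc (u x) (P k (bas x) v))"
    by (rule lin_on_eq_sum_bas[OF bil_lin_on_left[OF assms(1,3)] assms(2)])
  also have "\<dots> = (\<Sum>x\<in>spt u. sc (u x) (\<Sum>y\<in>spt v. sc (v y) (P k (bas x) (bas y))))"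
    using assms by (intro sum.cong refl arg_cong[where f="sc _"] lin_on_eq_sum_bas
        bil_lin_on_right VL_bas_spt)
  finally show ?thesis unfolding bilext_def by (simp add: sc_sum)
qed

lemma bilext_product: "bilext F a b = (\<Sum>p\<in>spt a \<times> spt b. sc (a (fst p) * b (snd p)) (F (fst p) (snd p)))"
  unfolding bilext_def sum.cartesian_product by (simp add: split_def)

lemma lin_on_bilext:
  assumes F: "lin_on N F" and G: "\<And>x y. x \<in> spt a \<Longrightarrow> y \<in> spt b \<Longrightarrow> G x y \<in> VL N"
  shows "F (bilext G a b) = bilext (\<lambda>x y. F (G x y)) a b"
  unfolding bilext_product using G by (intro lin_on_sum[OF F]) auto

definition trilext :: "(basis \<Rightarrow> basis \<Rightarrow> basis \<Rightarrow> vec) \<Rightarrow> vec \<Rightarrow> vec \<Rightarrow> vec \<Rightarrow> vec" where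
  "trilext F a b c = (\<Sum>x\<in>spt a. \<Sum>y\<in>spt b. \<Sum>z\<in>spt c. sc (a x * b y * c z) (F x y z))"

lemma sc_trilext: "sc g (trilext F a b c) = trilext (\<lambda>x y z. sc g (F x y z)) a b c"
  unfolding trilext_def sc_sum by (simp add: mult.commute)

lemma trilext_diff: "trilext F a b c - trilext G a b c = trilext (\<lambda>x y z. F x y z - G x y z) a b c"
  unfolding trilext_def by (simp add: sum_subtractf sc_diff)

lemma trilext_cong:
  "(\<And>x y z. x \<in> spt a \<Longrightarrow> y \<in> spt b \<Longrightarrow> z \<in> spt c \<Longrightarrow> F x y z = G x y z) \<Longrightarrow>
     trilext F a b c = trilext G a b c"
  unfolding trilext_def by (intro sum.cong refl) auto

lemma trilext_sum: "(\<Sum>j\<in>J. trilext (F j) a b c) = trilext (\<lambda>x y z. \<Sum>j\<in>J. F j x y z) a b c"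
  unfolding trilext_def sc_sum
  by (subst sum.swap, rule sum.cong[OF refl], subst sum.swap, rule sum.cong[OF refl], subst sum.swap, rule refl)

context
  fixes N P
  assumes P: "bil N P"
begin

lemma bil_nested_left_eq_trilext:
  assumes "a \<in> VL N" "b \<in> VL N" "c \<in> VL N"
  shows "P i (P i' a b) c = trilext (\<lambda>x y z. P i (P i' (bas x) (bas y)) (bas z)) a b c"
proof -
  have PV: "\<And>x y. x \<in> spt a \<Longrightarrow> y \<in> spt b \<Longrightarrow> P i' (bas x) (bas y) \<in> VL N"
    using assms by (intro bil_VL[OF P] VL_bas_spt) auto
  have "P i (P i' a b) c = bilext (\<lambda>x y. P i (P i' (bas x) (bas y)) c) a b"
    unfolding bil_eq_bilext[OF P assms(1,2)] by (rule lin_on_bilext[OF bil_lin_on_left[OF P assms(3)] PV])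
  also have "\<dots> = bilext (\<lambda>x y. \<Sum>z\<in>spt c. sc (c z) (P i (P i' (bas x) (bas y)) (bas z))) a b"
    unfolding bilext_def
    by (intro sum.cong refl arg_cong[where f="sc _"] lin_on_eq_sum_bas[OF bil_lin_on_right[OF P] assms(3)] PV)
  finally show ?thesis unfolding bilext_def trilext_def sc_sum by simp
qed

lemma bil_nested_right_eq_trilext:
  assumes "a \<in> VL N" "b \<in> VL N" "c \<in> VL N"
  shows "P i a (P i' b c) = trilext (\<lambda>x y z. P i (bas x) (P i' (bas y) (bas z))) a b c"
proof -
  have PV: "\<And>y z. y \<in> spt b \<Longrightarrow> z \<in> spt c \<Longrightarrow> P i' (bas y) (bas z) \<in> VL N"
    using assms by (intro bil_VL[OF P] VL_bas_spt) auto
  have "P i a (P i' b c) = bilext (\<lambda>y z. P i a (P i' (bas y) (bas z))) b c"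
    unfolding bil_eq_bilext[OF P assms(2,3)] by (rule lin_on_bilext[OF bil_lin_on_right[OF P assms(1)] PV])
  also have "\<dots> = bilext (\<lambda>y z. \<Sum>x\<in>spt a. sc (a x) (P i (bas x) (P i' (bas y) (bas z)))) b c"
    unfolding bilext_def
    by (intro sum.cong refl arg_cong[where f="sc _"] lin_on_eq_sum_bas[OF bil_lin_on_left[OF P] assms(1)] PV)
  also have "\<dots> = (\<Sum>y\<in>spt b. \<Sum>x\<in>spt a. \<Sum>z\<in>spt c. sc (a x * b y * c z) (P i (bas x) (P i' (bas y) (bas z))))"
    unfolding bilext_def sc_sum by (rule sum.cong[OF refl], subst sum.swap) (simp add: mult_ac)
  finally show ?thesis unfolding trilext_def by (subst sum.swap)
qed

lemma bil_nested_swap_eq_trilext: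
  assumes "a \<in> VL N" "b \<in> VL N" "c \<in> VL N"
  shows "P i b (P i' a c) = trilext (\<lambda>x y z. P i (bas y) (P i' (bas x) (bas z))) a b c"
  unfolding bil_nested_right_eq_trilext[OF assms(2,1,3)] trilext_def
  by (subst sum.swap) (simp add: mult_ac)

end

lemma hom_add: "hom v p \<Longrightarrow> hom w p \<Longrightarrow> hom (v + w) p"
  unfolding hom_def by (metis add.right_neutral plus_fun_apply)
lemma hom_sc: "hom v p \<Longrightarrow> hom (sc c v) p" by (auto simp: hom_def sc_apply)
lemma hom_zero: "hom 0 p" by (auto simp: hom_def)
lemma hom_sum: "(\<And>i. i \<in> I \<Longrightarrow> hom (f i) p) \<Longrightarrow> hom (\<Sum>i\<in>I. f i) p"
  by (induction I rule: infinite_finite_induct) (auto intro: hom_add hom_zero)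
lemma hom_bas: "hom a p \<Longrightarrow> x \<in> spt a \<Longrightarrow> hom (bas x) p"
  by (auto simp: hom_def spt_def bas_def)
lemma hom_bas_parity: "hom (bas x) (odd (card (fst (snd x))))"
  by (auto simp: hom_def bas_def)

lemma fsum_eq_sum_lessThan: assumes "\<And>j. j \<ge> J \<Longrightarrow> f j = 0" shows "fsum f = (\<Sum>j<J. f j)"
proof -
  have "{j. f j \<noteq> 0} \<subseteq> {..<J}" using assms not_le by blast
  thus ?thesis unfolding fsum_def by (intro sum.mono_neutral_left) auto
qed

lemma fsum_single: "(\<And>j. j \<noteq> 0 \<Longrightarrow> f j = 0) \<Longrightarrow> fsum f = f 0"
  using fsum_eq_sum_lessThan[of 1 f] by simp

lemma fsum_sc: "fsum (\<lambda>j. sc c (f j)) = sc c (fsum f)"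
proof (cases "c = 0")
  case False
  hence "{j. sc c (f j) \<noteq> 0} = {j. f j \<noteq> 0}" by (simp add: sc_eq_0_iff)
  thus ?thesis unfolding fsum_def by (simp only: sc_sum)
qed (simp add: fsum_def)

definition borch_lhs ::
    "(int \<Rightarrow> vec \<Rightarrow> vec \<Rightarrow> vec) \<Rightarrow> vec \<Rightarrow> vec \<Rightarrow> vec \<Rightarrow> int \<Rightarrow> int \<Rightarrow> int \<Rightarrow> nat \<Rightarrow> vec" where
  "borch_lhs Y a b c m n k j = sc (of_int m gchoose j) (Y (m + k - int j) (Y (n + int j) a b) c)"

definition borch_rhs ::
    "(int \<Rightarrow> vec \<Rightarrow> vec \<Rightarrow> vec) \<Rightarrow> vec \<Rightarrow> vec \<Rightarrow> vec \<Rightarrow> bool \<Rightarrow> bool \<Rightarrow> int \<Rightarrow> int \<Rightarrow> int \<Rightarrow> nat \<Rightarrow> vec" where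
  "borch_rhs Y a b c p p' m n k j = sc ((-1) ^ j * (of_int n gchoose j))
     (Y (m + n - int j) a (Y (k + int j) b c)
      - sc ((if even n then 1 else -1) * (if p \<and> p' then -1 else 1)) (Y (n + k - int j) b (Y (m + int j) a c)))"

lemma vsa_iff: "vsa S Y one \<longleftrightarrow>
     one \<in> S \<and> hom one False \<and>
     (\<forall>k. \<forall>a\<in>S. \<forall>b\<in>S. Y k a b \<in> S) \<and>
     (\<forall>k. \<forall>a\<in>S. \<forall>a'\<in>S. \<forall>b\<in>S. \<forall>c.
        Y k (a + a') b = Y k a b + Y k a' b \<and> Y k (sc c a) b = sc c (Y k a b) \<and>
        Y k b (a + a') = Y k b a + Y k b a' \<and> Y k b (sc c a) = sc c (Y k b a)) \<and>
     (\<forall>a\<in>S. \<forall>b\<in>S. \<exists>M. \<forall>k\<ge>M. Y k a b = 0) \<and>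
     (\<forall>a\<in>S. Y (-1) one a = a \<and> (\<forall>k. k \<noteq> -1 \<longrightarrow> Y k one a = 0)) \<and>
     (\<forall>a\<in>S. Y (-1) a one = a \<and> (\<forall>k\<ge>0. Y k a one = 0)) \<and>
     (\<forall>k. \<forall>a\<in>S. \<forall>b\<in>S. \<forall>p p'. hom a p \<longrightarrow> hom b p' \<longrightarrow> hom (Y k a b) (p \<noteq> p')) \<and>
     (\<forall>a\<in>S. \<forall>b\<in>S. \<forall>c\<in>S. \<forall>p p'. hom a p \<longrightarrow> hom b p' \<longrightarrow> (\<forall>m n k :: int.
        fsum (borch_lhs Y a b c m n k) = fsum (borch_rhs Y a b c p p' m n k)))"
  unfolding vsa_def borch_lhs_def[abs_def] borch_rhs_def[abs_def] by (rule refl)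

context
  fixes S Y one
  assumes Y: "vsa S Y one"
begin

lemma vsa_one_in: "one \<in> S"
  using Y unfolding vsa_iff by (elim conjE)

lemma vsa_one_even: "hom one False"
  using Y unfolding vsa_iff by (elim conjE)

lemma vsa_closed: "a \<in> S \<Longrightarrow> b \<in> S \<Longrightarrow> Y k a b \<in> S"
proof -
  have "\<forall>k. \<forall>a\<in>S. \<forall>b\<in>S. Y k a b \<in> S" using Y unfolding vsa_iff by (elim conjE)
  thus "a \<in> S \<Longrightarrow> b \<in> S \<Longrightarrow> Y k a b \<in> S" by blast
qed

lemma vsa_truncation: "a \<in> S \<Longrightarrow> b \<in> S \<Longrightarrow> eventually (\<lambda>k. Y k a b = 0) at_top"
proof -
  have "\<forall>a\<in>S. \<forall>b\<in>S. \<exists>M. \<forall>k\<ge>M. Y k a b = 0" using Y unfolding vsa_iff by (elim conjE)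
  thus "a \<in> S \<Longrightarrow> b \<in> S \<Longrightarrow> eventually (\<lambda>k. Y k a b = 0) at_top"
    unfolding eventually_at_top_linorder by blast
qed

lemma vsa_one_left: "a \<in> S \<Longrightarrow> Y k one a = (if k = -1 then a else 0)"
proof -
  have "\<forall>a\<in>S. Y (-1) one a = a \<and> (\<forall>k. k \<noteq> -1 \<longrightarrow> Y k one a = 0)"
    using Y unfolding vsa_iff by (elim conjE)
  thus "a \<in> S \<Longrightarrow> Y k one a = (if k = -1 then a else 0)" by auto
qed

lemma vsa_one_right: "a \<in> S \<Longrightarrow> Y (-1) a one = a"
  and vsa_one_right_nonneg: "a \<in> S \<Longrightarrow> 0 \<le> k \<Longrightarrow> Y k a one = 0"
proof -
  have "\<forall>a\<in>S. Y (-1) a one = a \<and> (\<forall>k\<ge>0. Y k a one = 0)" using Y unfolding vsa_iff by (elim conjE)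
  thus "a \<in> S \<Longrightarrow> Y (-1) a one = a" "a \<in> S \<Longrightarrow> 0 \<le> k \<Longrightarrow> Y k a one = 0" by blast+
qed

lemma vsa_hom: "a \<in> S \<Longrightarrow> b \<in> S \<Longrightarrow> hom a p \<Longrightarrow> hom b p' \<Longrightarrow> hom (Y k a b) (p \<noteq> p')"
proof -
  have "\<forall>k. \<forall>a\<in>S. \<forall>b\<in>S. \<forall>p p'. hom a p \<longrightarrow> hom b p' \<longrightarrow> hom (Y k a b) (p \<noteq> p')"
    using Y unfolding vsa_iff by (elim conjE)
  thus "a \<in> S \<Longrightarrow> b \<in> S \<Longrightarrow> hom a p \<Longrightarrow> hom b p' \<Longrightarrow> hom (Y k a b) (p \<noteq> p')" by blast
qed

lemma vsa_borcherds:
  "a \<in> S \<Longrightarrow> b \<in> S \<Longrightarrow> c \<in> S \<Longrightarrow> hom a p \<Longrightarrow> hom b p' \<Longrightarrow>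
     fsum (borch_lhs Y a b c m n k) = fsum (borch_rhs Y a b c p p' m n k)"
proof -
  have "\<forall>a\<in>S. \<forall>b\<in>S. \<forall>c\<in>S. \<forall>p p'. hom a p \<longrightarrow> hom b p' \<longrightarrow> (\<forall>m n k :: int.
        fsum (borch_lhs Y a b c m n k) = fsum (borch_rhs Y a b c p p' m n k))"
    using Y unfolding vsa_iff by (elim conjE)
  thus "a \<in> S \<Longrightarrow> b \<in> S \<Longrightarrow> c \<in> S \<Longrightarrow> hom a p \<Longrightarrow> hom b p' \<Longrightarrow>
     fsum (borch_lhs Y a b c m n k) = fsum (borch_rhs Y a b c p p' m n k)" by blast
qed

lemma vsa_zero_mode_derivation:
  assumes "a \<in> S" "b \<in> S" "c \<in> S" "hom a False" "hom b p'"
  shows "Y k (Y 0 a b) c = Y 0 a (Y k b c) - Y k b (Y 0 a c)"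
proof -
  have "fsum (borch_lhs Y a b c 0 0 k) = fsum (borch_rhs Y a b c False p' 0 0 k)"
    using assms by (rule vsa_borcherds)
  moreover have "fsum (borch_lhs Y a b c 0 0 k) = Y k (Y 0 a b) c"
    by (subst fsum_single) (auto simp: borch_lhs_def gbinomial_0_left sc_def)
  moreover have "fsum (borch_rhs Y a b c False p' 0 0 k) = Y 0 a (Y k b c) - Y k b (Y 0 a c)"
    by (subst fsum_single) (auto simp: borch_rhs_def gbinomial_0_left sc_def)
  ultimately show ?thesis by simp
qed

end

lemma vsa_bil: "vsa (VL N) Y one \<Longrightarrow> bil N Y"
  unfolding vsa_def bil_def by (elim conjE, intro conjI) assumption+

section \<open>Reduction of the Borcherds identity to basis vectors\<close>

context
  fixes N P
  assumes P: "bil N P"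
begin

lemma borch_lhs_eq_trilext:
  assumes "a \<in> VL N" "b \<in> VL N" "c \<in> VL N"
  shows "borch_lhs P a b c m n k j = trilext (\<lambda>x y z. borch_lhs P (bas x) (bas y) (bas z) m n k j) a b c"
  unfolding borch_lhs_def bil_nested_left_eq_trilext[OF P assms] sc_trilext ..

lemma borch_rhs_eq_trilext:
  assumes "a \<in> VL N" "b \<in> VL N" "c \<in> VL N"
  shows "borch_rhs P a b c p p' m n k j
           = trilext (\<lambda>x y z. borch_rhs P (bas x) (bas y) (bas z) p p' m n k j) a b c"
  unfolding borch_rhs_def bil_nested_right_eq_trilext[OF P assms] bil_nested_swap_eq_trilext[OF P assms]
  by (simp only: sc_trilext trilext_diff)

lemma borch_terms_eventually_zero:
  assumes trunc: "\<And>a b. a \<in> VL N \<Longrightarrow> b \<in> VL N \<Longrightarrow> eventually (\<lambda>k. P k a b = 0) at_top"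
    and V: "a \<in> VL N" "b \<in> VL N" "c \<in> VL N"
  shows "eventually (\<lambda>j. borch_lhs P a b c m n k j = 0 \<and> borch_rhs P a b c p p' m n k j = 0) sequentially"
proof -
  have shift: "eventually (\<lambda>j. P (l + int j) u v = 0) sequentially" if uv: "u \<in> VL N" "v \<in> VL N" for l u v
  proof -
    obtain M where "\<And>i. i \<ge> M \<Longrightarrow> P i u v = 0"
      using trunc[OF uv] unfolding eventually_at_top_linorder by blast
    thus ?thesis unfolding eventually_sequentially by (intro exI[of _ "nat (M - l)"]) auto
  qed
  show ?thesis
    using shift[OF V(1,2), of n] shift[OF V(2,3), of k] shift[OF V(1,3), of m]
  proof eventually_elim
    case (elim j)
    thus ?case unfolding borch_lhs_def borch_rhs_def
      using bil_zero_left[OF P V(3)] bil_zero_right[OF P V(1)] bil_zero_right[OF P V(2)] by simp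
  qed
qed

lemma borch_terms_eventually_zero_uniform:
  assumes trunc: "\<And>a b. a \<in> VL N \<Longrightarrow> b \<in> VL N \<Longrightarrow> eventually (\<lambda>k. P k a b = 0) at_top"
    and V: "a \<in> VL N" "b \<in> VL N" "c \<in> VL N"
  obtains J where "\<And>x y z j. x \<in> spt a \<Longrightarrow> y \<in> spt b \<Longrightarrow> z \<in> spt c \<Longrightarrow> j \<ge> J \<Longrightarrow>
      borch_lhs P (bas x) (bas y) (bas z) m n k j = 0 \<and> borch_rhs P (bas x) (bas y) (bas z) p p' m n k j = 0"
proof -
  let ?T = "spt a \<times> spt b \<times> spt c"
  let ?Z = "\<lambda>j t. borch_lhs P (bas (fst t)) (bas (fst (snd t))) (bas (snd (snd t))) m n k j = 0
                 \<and> borch_rhs P (bas (fst t)) (bas (fst (snd t))) (bas (snd (snd t))) p p' m n k j = 0"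
  have "finite ?T" using VL_finite V by auto
  moreover have "\<forall>t\<in>?T. eventually (\<lambda>j. ?Z j t) sequentially"
    using VL_bas_spt[OF V(1)] VL_bas_spt[OF V(2)] VL_bas_spt[OF V(3)]
    by (auto intro!: borch_terms_eventually_zero trunc)
  ultimately have "eventually (\<lambda>j. \<forall>t\<in>?T. ?Z j t) sequentially"
    by (rule eventually_ball_finite)
  thus ?thesis using that unfolding eventually_sequentially by fastforce
qed

lemma borcherds_from_basis:
  assumes trunc: "\<And>a b. a \<in> VL N \<Longrightarrow> b \<in> VL N \<Longrightarrow> eventually (\<lambda>k. P k a b = 0) at_top"
    and basis: "\<And>x y z. valid N x \<Longrightarrow> valid N y \<Longrightarrow> valid N z \<Longrightarrow> hom (bas x) p \<Longrightarrow> hom (bas y) p' \<Longrightarrow>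
        fsum (borch_lhs P (bas x) (bas y) (bas z) m n k) = fsum (borch_rhs P (bas x) (bas y) (bas z) p p' m n k)"
    and V: "a \<in> VL N" "b \<in> VL N" "c \<in> VL N" and H: "hom a p" "hom b p'"
  shows "fsum (borch_lhs P a b c m n k) = fsum (borch_rhs P a b c p p' m n k)"
proof -
  let ?L = "\<lambda>x y z. borch_lhs P (bas x) (bas y) (bas z) m n k"
  let ?R = "\<lambda>x y z. borch_rhs P (bas x) (bas y) (bas z) p p' m n k"
  obtain J where J: "\<And>x y z j. x \<in> spt a \<Longrightarrow> y \<in> spt b \<Longrightarrow> z \<in> spt c \<Longrightarrow> j \<ge> J \<Longrightarrow>
      ?L x y z j = 0 \<and> ?R x y z j = 0"
    using borch_terms_eventually_zero_uniform[OF trunc V] by blast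
  have "fsum (borch_lhs P a b c m n k) = (\<Sum>j<J. borch_lhs P a b c m n k j)"
    by (rule fsum_eq_sum_lessThan)
       (simp add: borch_lhs_eq_trilext[OF V] J trilext_cong[where G="\<lambda>x y z. 0"] trilext_def)
  also have "\<dots> = trilext (\<lambda>x y z. \<Sum>j<J. ?L x y z j) a b c"
    unfolding borch_lhs_eq_trilext[OF V] trilext_sum ..
  also have "\<dots> = trilext (\<lambda>x y z. \<Sum>j<J. ?R x y z j) a b c"
  proof (rule trilext_cong)
    fix x y z assume xyz: "x \<in> spt a" "y \<in> spt b" "z \<in> spt c"
    have "(\<Sum>j<J. ?L x y z j) = fsum (?L x y z)"
      by (rule fsum_eq_sum_lessThan[symmetric]) (use J xyz in blast)
    also have "\<dots> = fsum (?R x y z)"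
      using basis VL_valid xyz V hom_bas H by blast
    also have "\<dots> = (\<Sum>j<J. ?R x y z j)"
      by (rule fsum_eq_sum_lessThan) (use J xyz in blast)
    finally show "(\<Sum>j<J. ?L x y z j) = (\<Sum>j<J. ?R x y z j)" .
  qed
  also have "\<dots> = (\<Sum>j<J. borch_rhs P a b c p p' m n k j)"
    unfolding borch_rhs_eq_trilext[OF V] trilext_sum ..
  also have "\<dots> = fsum (borch_rhs P a b c p p' m n k)"
    by (rule fsum_eq_sum_lessThan[symmetric])
       (simp add: borch_rhs_eq_trilext[OF V] J trilext_cong[where G="\<lambda>x y z. 0"] trilext_def)
  finally show ?thesis .
qed

end

lemma valid_Apart_outside: assumes "valid N x" "i \<notin> {1..N}" shows "Apart_b x i = 0"
proof -
  have "snd (snd x) \<in> lat N" "i = 0 \<or> i > N" using assms unfolding valid_def by auto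
  thus ?thesis unfolding lat_def Apart_b_def by blast
qed

lemma has_Apart_bas: "valid N x \<Longrightarrow> has_Apart N (Apart_b x) (bas x)"
  unfolding has_Apart_def by (simp add: VL_bas bas_apply)

text \<open>\<open>B\<^sup>i\<^sub>-\<^sub>1 e\<^sup>0\<close>: its zero mode \<open>B\<^sup>i\<^sub>0\<close> reads off the \<open>i\<close>-th coordinate of
  the A-part, as \<open>(B\<^sup>i, A\<^sup>j) = \<delta>\<^sub>i\<^sub>j\<close>.\<close>
definition hvec :: "nat \<Rightarrow> vec" where "hvec i = bas ({#(True, i, 1)#}, {}, lzero)"

lemma hvec_VL: "i \<in> {1..N} \<Longrightarrow> hvec i \<in> VL N"
  unfolding hvec_def by (rule VL_bas) (simp add: valid_def lat_def lzero_def)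

lemma hvec_even: "hom (hvec i) False"
  unfolding hvec_def hom_def bas_def by simp

context
  fixes N Y
  assumes Y: "lattice_vsa N Y"
begin

lemma lattice_vsa_vsa: "vsa (VL N) Y vac"
  using Y unfolding lattice_vsa_def by blast

lemma lattice_vsa_bil: "bil N Y"
  by (rule vsa_bil[OF lattice_vsa_vsa])

lemma hvec_zero_mode:
  assumes "i \<in> {1..N}" "W \<in> VL N"
  shows "Y 0 (hvec i) W = (\<lambda>z. of_int (Apart_b z i) * W z)"
proof
  fix z
  have "Y 0 (hvec i) W z = lin (heis (True, i) 0) W z"
    using Y assms unfolding lattice_vsa_def hvec_def by auto
  also have "\<dots> = (\<Sum>b\<in>spt W. if b = z then of_int (Apart_b z i) * W z else 0)"
    unfolding lin_apply
    by (intro sum.cong refl) (auto simp: heis_def Apart_b_def sc_apply bas_apply split: prod.splits)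
  also have "\<dots> = of_int (Apart_b z i) * W z"
    using VL_finite[OF assms(2)] by (simp add: spt_def)
  finally show "Y 0 (hvec i) W z = of_int (Apart_b z i) * W z" .
qed

lemma hvec_zero_mode_bas:
  "i \<in> {1..N} \<Longrightarrow> valid N x \<Longrightarrow> Y 0 (hvec i) (bas x) = sc (of_int (Apart_b x i)) (bas x)"
  by (auto simp: hvec_zero_mode VL_bas sc_def bas_apply fun_eq_iff)

lemma Y_has_Apart:
  assumes x: "valid N x" and y: "valid N y"
  shows "has_Apart N (Apart_b x + Apart_b y) (Y k (bas x) (bas y))"
proof -
  define W where "W = Y k (bas x) (bas y)"
  have x_VL: "bas x \<in> VL N" and y_VL: "bas y \<in> VL N" using VL_bas x y by auto
  have W: "W \<in> VL N" unfolding W_def by (rule bil_VL[OF lattice_vsa_bil x_VL y_VL])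
  have "Apart_b z i = Apart_b x i + Apart_b y i" if "W z \<noteq> 0" "i \<in> {1..N}" for z i
  proof -
    have "Y k (Y 0 (hvec i) (bas x)) (bas y) = Y 0 (hvec i) W - Y k (bas x) (Y 0 (hvec i) (bas y))"
      unfolding W_def using that(2) x_VL y_VL hvec_VL hvec_even hom_bas_parity
      by (intro vsa_zero_mode_derivation[OF lattice_vsa_vsa])
    hence "sc (of_int (Apart_b x i)) W = Y 0 (hvec i) W - sc (of_int (Apart_b y i)) W"
      unfolding W_def using that(2) x y x_VL y_VL
      by (simp add: hvec_zero_mode_bas bil_sc_left[OF lattice_vsa_bil] bil_sc_right[OF lattice_vsa_bil])
    from fun_cong[OF this, of z]
    have "of_int (Apart_b x i) * W z = of_int (Apart_b z i) * W z - of_int (Apart_b y i) * W z"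
      by (simp add: hvec_zero_mode[OF that(2) W] sc_apply)
    hence "W z * of_int (Apart_b z i) = W z * of_int (Apart_b x i + Apart_b y i)"
      by (simp add: algebra_simps)
    hence "(of_int (Apart_b z i) :: complex) = of_int (Apart_b x i + Apart_b y i)"
      using that(1) by simp
    thus ?thesis by (simp only: of_int_eq_iff)
  qed
  moreover have "Apart_b z i = Apart_b x i + Apart_b y i" if "W z \<noteq> 0" "i \<notin> {1..N}" for z i
  proof -
    have "valid N z" using VL_valid[OF W] that(1) by (simp add: spt_def)
    thus ?thesis using valid_Apart_outside that(2) x y by simp
  qed
  ultimately have "Apart_b z i = (Apart_b x + Apart_b y) i" if "W z \<noteq> 0" for z i
    using that by (cases "i \<in> {1..N}") simp_all
  thus ?thesis unfolding has_Apart_def W_def[symmetric] using W by (simp add: fun_eq_iff)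
qed

end

section \<open>The deformed products\<close>

lemma qprod_eq_bilext: "qprod N q Y = (\<lambda>k. bilext (\<lambda>x y. sc (q ^ qexp N x y) (Y k (bas x) (bas y))))"
  unfolding qprod_def bilext_def spt_def by (intro ext) (simp add: mult.commute)

lemma qexp_vac: "x \<in> spt vac \<Longrightarrow> qexp N x y = 0" "y \<in> spt vac \<Longrightarrow> qexp N x y = 0"
proof -
  have "spt vac = {({#}, {}, lzero)}" "Apart_b ({#}, {}, lzero) = 0"
    by (auto simp: vac_def evec_def Apart_b_def lzero_def zero_fun_def)
  thus "x \<in> spt vac \<Longrightarrow> qexp N x y = 0" "y \<in> spt vac \<Longrightarrow> qexp N x y = 0"
    by (auto simp: qexp_def)
qed

context
  fixes N Y
  assumes Y: "lattice_vsa N Y"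
begin

lemma qprod_bil: "bil N (qprod N q Y)"
  unfolding qprod_eq_bilext by (intro bil_bilext VL_sc vsa_closed[OF lattice_vsa_vsa[OF Y]] VL_bas)

lemma qprod_eq_Y:
  assumes "a \<in> VL N" "b \<in> VL N" "\<And>x y. x \<in> spt a \<Longrightarrow> y \<in> spt b \<Longrightarrow> qexp N x y = 0"
  shows "qprod N q Y k a b = Y k a b"
  unfolding qprod_eq_bilext bil_eq_bilext[OF lattice_vsa_bil[OF Y] assms(1,2)]
  using assms(3) by (intro bilext_cong) simp

lemma qprod_has_Apart:
  assumes v: "has_Apart N \<alpha> v" and w: "has_Apart N \<alpha>' w"
  shows "qprod N q Y k v w = sc (q ^ ht_defect N \<alpha> \<alpha>') (Y k v w)"
proof -
  have V: "v \<in> VL N" "w \<in> VL N"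
    and A: "\<And>x. x \<in> spt v \<Longrightarrow> Apart_b x = \<alpha>" "\<And>y. y \<in> spt w \<Longrightarrow> Apart_b y = \<alpha>'"
    using assms unfolding has_Apart_def spt_def by auto
  show ?thesis
    unfolding qprod_eq_bilext bil_eq_bilext[OF lattice_vsa_bil[OF Y] V] sc_bilext qexp_eq_ht_defect
    using A by (intro bilext_cong) simp
qed

lemma qprod_truncation:
  assumes "a \<in> VL N" "b \<in> VL N"
  shows "eventually (\<lambda>k. qprod N q Y k a b = 0) at_top"
proof -
  have "eventually (\<lambda>k. \<forall>t\<in>spt a \<times> spt b. Y k (bas (fst t)) (bas (snd t)) = 0) at_top"
    using assms VL_finite VL_bas_spt
    by (intro eventually_ball_finite ballI vsa_truncation[OF lattice_vsa_vsa[OF Y]]) auto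
  thus ?thesis
    by eventually_elim (auto simp: qprod_eq_bilext bilext_def intro!: sum.neutral)
qed

lemma qprod_hom:
  assumes "a \<in> VL N" "b \<in> VL N" "hom a p" "hom b p'"
  shows "hom (qprod N q Y k a b) (p \<noteq> p')"
  unfolding qprod_eq_bilext bilext_def using assms
  by (intro hom_sum hom_sc vsa_hom[OF lattice_vsa_vsa[OF Y]] VL_bas_spt hom_bas)

lemma qprod_nested_left:
  assumes x: "valid N x" and y: "valid N y" and z: "valid N z"
  shows "qprod N q Y i (qprod N q Y i' (bas x) (bas y)) (bas z)
         = sc (q ^ ht_defect3 N (Apart_b x) (Apart_b y) (Apart_b z)) (Y i (Y i' (bas x) (bas y)) (bas z))"
proof -
  let ?W = "Y i' (bas x) (bas y)"
  have W: "has_Apart N (Apart_b x + Apart_b y) ?W" by (rule Y_has_Apart[OF Y x y])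
  hence "?W \<in> VL N" unfolding has_Apart_def by blast
  have "qprod N q Y i (qprod N q Y i' (bas x) (bas y)) (bas z)
      = qprod N q Y i (sc (q ^ ht_defect N (Apart_b x) (Apart_b y)) ?W) (bas z)"
    using qprod_has_Apart[OF has_Apart_bas[OF x] has_Apart_bas[OF y]] by simp
  also have "\<dots> = sc (q ^ ht_defect N (Apart_b x) (Apart_b y)) (qprod N q Y i ?W (bas z))"
    using \<open>?W \<in> VL N\<close> z by (simp add: bil_sc_left[OF qprod_bil] VL_bas)
  also have "\<dots> = sc (q ^ ht_defect N (Apart_b x) (Apart_b y) * q ^ ht_defect N (Apart_b x + Apart_b y) (Apart_b z))
                     (Y i ?W (bas z))"
    using qprod_has_Apart[OF W has_Apart_bas[OF z]] by simp
  finally show ?thesis by (simp only: power_add[symmetric] ht_defect_cocycle_left)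
qed

lemma qprod_nested_right:
  assumes x: "valid N x" and y: "valid N y" and z: "valid N z"
  shows "qprod N q Y i (bas x) (qprod N q Y i' (bas y) (bas z))
         = sc (q ^ ht_defect3 N (Apart_b x) (Apart_b y) (Apart_b z)) (Y i (bas x) (Y i' (bas y) (bas z)))"
proof -
  let ?W = "Y i' (bas y) (bas z)"
  have W: "has_Apart N (Apart_b y + Apart_b z) ?W" by (rule Y_has_Apart[OF Y y z])
  hence "?W \<in> VL N" unfolding has_Apart_def by blast
  have "qprod N q Y i (bas x) (qprod N q Y i' (bas y) (bas z))
      = qprod N q Y i (bas x) (sc (q ^ ht_defect N (Apart_b y) (Apart_b z)) ?W)"
    using qprod_has_Apart[OF has_Apart_bas[OF y] has_Apart_bas[OF z]] by simp
  also have "\<dots> = sc (q ^ ht_defect N (Apart_b y) (Apart_b z)) (qprod N q Y i (bas x) ?W)"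
    using \<open>?W \<in> VL N\<close> x by (simp add: bil_sc_right[OF qprod_bil] VL_bas)
  also have "\<dots> = sc (q ^ ht_defect N (Apart_b y) (Apart_b z) * q ^ ht_defect N (Apart_b x) (Apart_b y + Apart_b z))
                     (Y i (bas x) ?W)"
    using qprod_has_Apart[OF has_Apart_bas[OF x] W] by simp
  finally show ?thesis by (simp only: power_add[symmetric] ht_defect_cocycle_right)
qed

lemma qprod_borcherds_basis:
  assumes x: "valid N x" and y: "valid N y" and z: "valid N z"
    and H: "hom (bas x) p" "hom (bas y) p'"
  shows "fsum (borch_lhs (qprod N q Y) (bas x) (bas y) (bas z) m n k)
       = fsum (borch_rhs (qprod N q Y) (bas x) (bas y) (bas z) p p' m n k)"
proof -
  define E where "E = ht_defect3 N (Apart_b x) (Apart_b y) (Apart_b z)"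
  have "borch_lhs (qprod N q Y) (bas x) (bas y) (bas z) m n k
      = (\<lambda>j. sc (q ^ E) (borch_lhs Y (bas x) (bas y) (bas z) m n k j))"
    unfolding borch_lhs_def E_def qprod_nested_left[OF x y z] by (simp add: mult.commute)
  moreover have "borch_rhs (qprod N q Y) (bas x) (bas y) (bas z) p p' m n k
      = (\<lambda>j. sc (q ^ E) (borch_rhs Y (bas x) (bas y) (bas z) p p' m n k j))"
    unfolding borch_rhs_def E_def qprod_nested_right[OF x y z] qprod_nested_right[OF y x z]
    by (simp add: ht_defect3_commute[of N "Apart_b y"] mult.commute sc_diff)
  moreover have "fsum (borch_lhs Y (bas x) (bas y) (bas z) m n k)
               = fsum (borch_rhs Y (bas x) (bas y) (bas z) p p' m n k)"
    using x y z H by (intro vsa_borcherds[OF lattice_vsa_vsa[OF Y]] VL_bas)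
  ultimately show ?thesis by (simp add: fsum_sc)
qed

lemma qprod_vac_left: "a \<in> VL N \<Longrightarrow> qprod N q Y k vac a = Y k vac a"
  using vsa_one_in[OF lattice_vsa_vsa[OF Y]] by (intro qprod_eq_Y) (simp_all add: qexp_vac)

lemma qprod_vac_right: "a \<in> VL N \<Longrightarrow> qprod N q Y k a vac = Y k a vac"
  using vsa_one_in[OF lattice_vsa_vsa[OF Y]] by (intro qprod_eq_Y) (simp_all add: qexp_vac)

lemma qprod_vsa: "vsa (VL N) (qprod N q Y) vac"
proof -
  have vac: "vac \<in> VL N" by (rule vsa_one_in[OF lattice_vsa_vsa[OF Y]])
  have B: "bil N (qprod N q Y)" by (rule qprod_bil)
  show ?thesis
    unfolding vsa_iff
  proof (intro conjI allI ballI impI)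
    show "vac \<in> VL N" by (rule vac)
    show "hom vac False" by (rule vsa_one_even[OF lattice_vsa_vsa[OF Y]])
    fix k a a' b c assume "a \<in> VL N" "a' \<in> VL N" "b \<in> VL N"
    thus "qprod N q Y k a b \<in> VL N"
      "qprod N q Y k (a + a') b = qprod N q Y k a b + qprod N q Y k a' b"
      "qprod N q Y k (sc c a) b = sc c (qprod N q Y k a b)"
      "qprod N q Y k b (a + a') = qprod N q Y k b a + qprod N q Y k b a'"
      "qprod N q Y k b (sc c a) = sc c (qprod N q Y k b a)"
      using B unfolding bil_def by blast+
  next
    fix a b assume "a \<in> VL N" "b \<in> VL N"
    thus "\<exists>M. \<forall>k\<ge>M. qprod N q Y k a b = 0"
      using qprod_truncation unfolding eventually_at_top_linorder by blast
  next
    fix a k assume "a \<in> VL N"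
    thus "qprod N q Y (-1) vac a = a" "k \<noteq> -1 \<Longrightarrow> qprod N q Y k vac a = 0"
      "qprod N q Y (-1) a vac = a" "0 \<le> k \<Longrightarrow> qprod N q Y k a vac = 0"
      by (simp_all add: qprod_vac_left qprod_vac_right vsa_one_left[OF lattice_vsa_vsa[OF Y]]
          vsa_one_right[OF lattice_vsa_vsa[OF Y]] vsa_one_right_nonneg[OF lattice_vsa_vsa[OF Y]])
  next
    fix k a b p p' assume "a \<in> VL N" "b \<in> VL N" "hom a p" "hom b p'"
    thus "hom (qprod N q Y k a b) (p \<noteq> p')" by (rule qprod_hom)
  next
    fix a b c p p' m n k assume "a \<in> VL N" "b \<in> VL N" "c \<in> VL N" "hom a p" "hom b p'"
    thus "fsum (borch_lhs (qprod N q Y) a b c m n k) = fsum (borch_rhs (qprod N q Y) a b c p p' m n k)"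
      by (intro borcherds_from_basis[OF B qprod_truncation qprod_borcherds_basis])
  qed
qed

end

section \<open>The rescaling isomorphism\<close>

lemma tq_apply: assumes "finite (spt v)" shows "tq N q v = (\<lambda>x. q ^ ht N (Apart_b x) * v x)"
proof
  fix z
  have "tq N q v z = (\<Sum>b\<in>spt v. if b = z then q ^ ht N (Apart_b z) * v z else 0)"
    unfolding tq_def lin_apply by (intro sum.cong refl) (auto simp: sc_apply bas_apply)
  also have "\<dots> = q ^ ht N (Apart_b z) * v z" using assms by (simp add: spt_def)
  finally show "tq N q v z = q ^ ht N (Apart_b z) * v z" .
qed

lemma lin_on_tq: "lin_on N (tq N q)"
  unfolding lin_on_def
proof (intro ballI allI conjI)
  fix a b c assume a: "a \<in> VL N" and b: "b \<in> VL N"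
  show "tq N q (a + b) = tq N q a + tq N q b"
    unfolding tq_apply[OF VL_finite[OF VL_add[OF a b]]] tq_apply[OF VL_finite[OF a]]
      tq_apply[OF VL_finite[OF b]]
    by (simp add: fun_eq_iff algebra_simps)
  show "tq N q (sc c a) = sc c (tq N q a)"
    unfolding tq_apply[OF VL_finite[OF VL_sc[OF a]]] tq_apply[OF VL_finite[OF a]]
    by (simp add: fun_eq_iff sc_apply algebra_simps)
qed

lemma tq_has_Apart:
  assumes "has_Apart N \<alpha> W" shows "tq N q W = sc (q ^ ht N \<alpha>) W"
proof
  fix z
  have "W \<in> VL N" "W z \<noteq> 0 \<Longrightarrow> Apart_b z = \<alpha>" using assms unfolding has_Apart_def by blast+
  thus "tq N q W z = sc (q ^ ht N \<alpha>) W z"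
    by (cases "W z = 0") (simp_all add: tq_apply VL_finite sc_apply)
qed

context
  fixes N :: nat and q :: complex
  assumes q: "q \<noteq> 0"
begin

lemma spt_tq: "finite (spt v) \<Longrightarrow> spt (tq N q v) = spt v"
  using q by (simp add: tq_apply spt_def)

lemma tq_VL: "v \<in> VL N \<Longrightarrow> tq N q v \<in> VL N"
  using VL_subset spt_tq VL_finite by (metis order_refl)

lemma tq_bij: "bij_betw (tq N q) (VL N) (VL N)"
proof -
  define inv where "inv w = (\<lambda>x. w x / q ^ ht N (Apart_b x))" for w :: vec
  have inv_VL: "inv w \<in> VL N" if "w \<in> VL N" for w
    using q VL_subset[OF that] by (simp add: inv_def spt_def)
  show ?thesis
  proof (rule bij_betw_byWitness[where f'=inv])
    show "inv ` VL N \<subseteq> VL N" using inv_VL by blast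
    show "tq N q ` VL N \<subseteq> VL N" using tq_VL by blast
    show "\<forall>v\<in>VL N. inv (tq N q v) = v"
      using q by (simp add: inv_def tq_apply VL_finite)
    show "\<forall>w\<in>VL N. tq N q (inv w) = w"
    proof
      fix w assume "w \<in> VL N"
      show "tq N q (inv w) = w"
        unfolding tq_apply[OF VL_finite[OF inv_VL[OF \<open>w \<in> VL N\<close>]]] using q by (simp add: inv_def)
    qed
  qed
qed

context
  fixes Y
  assumes Y: "lattice_vsa N Y"
begin

lemma tq_qprod:
  assumes a: "a \<in> VL N" and b: "b \<in> VL N"
  shows "tq N q (qprod N q Y k a b) = Y k (tq N q a) (tq N q b)"
proof -
  have tq_term: "tq N q (sc (q ^ qexp N x y) (Y k (bas x) (bas y)))
      = sc (q ^ ht N (Apart_b x) * q ^ ht N (Apart_b y)) (Y k (bas x) (bas y))"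
    if "x \<in> spt a" "y \<in> spt b" for x y
  proof -
    have "valid N x" "valid N y" using VL_valid a b that by auto
    moreover have "qexp N x y + ht N (Apart_b x + Apart_b y) = ht N (Apart_b x) + ht N (Apart_b y)"
      unfolding qexp_def using ht_add_le by simp
    ultimately show ?thesis
      by (simp add: lin_on_sc[OF lin_on_tq] bil_VL[OF lattice_vsa_bil[OF Y]] VL_bas
          tq_has_Apart[OF Y_has_Apart[OF Y]] power_add[symmetric])
  qed
  have "tq N q (qprod N q Y k a b) = bilext (\<lambda>x y. tq N q (sc (q ^ qexp N x y) (Y k (bas x) (bas y)))) a b"
    unfolding qprod_eq_bilext using a b
    by (intro lin_on_bilext[OF lin_on_tq] VL_sc bil_VL[OF lattice_vsa_bil[OF Y]] VL_bas_spt)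
  also have "\<dots> = bilext (\<lambda>x y. sc (q ^ ht N (Apart_b x) * q ^ ht N (Apart_b y)) (Y k (bas x) (bas y))) a b"
    by (rule bilext_cong) (rule tq_term)
  also have "\<dots> = bilext (\<lambda>x y. Y k (bas x) (bas y)) (tq N q a) (tq N q b)"
    using q by (subst bilext_rescale) (simp_all add: tq_apply[OF VL_finite[OF a]] tq_apply[OF VL_finite[OF b]])
  also have "\<dots> = Y k (tq N q a) (tq N q b)"
    by (rule bil_eq_bilext[OF lattice_vsa_bil[OF Y] tq_VL[OF a] tq_VL[OF b], symmetric])
  finally show ?thesis .
qed

lemma tq_vsa_iso: "vsa_iso (VL N) (qprod N q Y) vac Y vac (tq N q)"
  unfolding vsa_iso_def
proof (intro conjI ballI allI impI)
  show "bij_betw (tq N q) (VL N) (VL N)" by (rule tq_bij)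
  have "has_Apart N 0 vac"
    using vsa_one_in[OF lattice_vsa_vsa[OF Y]]
    by (simp add: has_Apart_def vac_def evec_def bas_apply Apart_b_def lzero_def zero_fun_def)
  thus "tq N q vac = vac" by (simp add: tq_has_Apart)
  fix a b c assume "a \<in> VL N" "b \<in> VL N"
  thus "tq N q (a + b) = tq N q a + tq N q b" "tq N q (sc c a) = sc c (tq N q a)"
    using lin_on_tq unfolding lin_on_def by blast+
next
  fix a p assume "a \<in> VL N" "hom a p"
  thus "hom (tq N q a) p" by (auto simp: hom_def tq_apply VL_finite)
next
  fix k a b assume "a \<in> VL N" "b \<in> VL N"
  thus "tq N q (qprod N q Y k a b) = Y k (tq N q a) (tq N q b)" by (rule tq_qprod)
qed

end

end

section \<open>The degenerate products at \<open>q = 0\<close>\<close>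

lemma qprod_zero_has_Apart:
  assumes "lattice_vsa N Y" "has_Apart N \<alpha> v" "has_Apart N \<alpha>' w"
  shows "qprod N 0 Y k v w = (if \<exists>j\<in>{1..Suc N}. inDelta N j \<alpha> \<and> inDelta N j \<alpha>' then Y k v w else 0)"
proof (cases "\<exists>j\<in>{1..Suc N}. inDelta N j \<alpha> \<and> inDelta N j \<alpha>'")
  case True
  hence "ht_defect N \<alpha> \<alpha>' = 0" using ht_defect_eq_0_iff by blast
  thus ?thesis unfolding if_P[OF True] qprod_has_Apart[OF assms] by simp
next
  case False
  hence "ht_defect N \<alpha> \<alpha>' \<noteq> 0" using ht_defect_eq_0_iff by blast
  thus ?thesis unfolding if_not_P[OF False] qprod_has_Apart[OF assms] by (simp add: power_0_left)
qed

theorem mainTheorem1: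
  fixes N :: nat and Y :: "int \<Rightarrow> vec \<Rightarrow> vec \<Rightarrow> vec"
  assumes "1 \<le> N" and "lattice_vsa N Y"
  shows "(\<forall>q::complex. vsa (VL N) (qprod N q Y) vac)
       \<and> (\<forall>q::complex. q \<noteq> 0 \<longrightarrow> vsa_iso (VL N) (qprod N q Y) vac Y vac (tq N q))
       \<and> (\<forall>k \<alpha> \<alpha>' v w. has_Apart N \<alpha> v \<longrightarrow> has_Apart N \<alpha>' w \<longrightarrow>
            qprod N 0 Y k v w =
              (if \<exists>j\<in>{1..Suc N}. inDelta N j \<alpha> \<and> inDelta N j \<alpha>' then Y k v w else 0))"
  using qprod_vsa[OF assms(2)] tq_vsa_iso[OF _ assms(2)] qprod_zero_has_Apart[OF assms(2)] by blast

end
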